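(* Let $G$ be a finite group, $\Lambda$ an absolutely irreducible $\mathbb Z[G]$-module of finite rank, $W=\Lambda\otimes\mathbb Q$, $w$ a weight of $\Lambda$, $(\,,\,)$ the associated form and $H=\mathrm{Stab}_G(w)$. Then (1) $(w,gw)-(w,w)$ is an integer for all $g\in G$; (2) $(w,gw)\ge (w,w)$ for all $g\in G$, and $(w,gw)>(w,w)$ if $g\in G\setminus H$.
   Context: A weight of $\Lambda$ is $w\in W$ with $gw-w\in\Lambda$ for all $g\in G$. $(\,,\,)$ is the negative definite $G$-invariant symmetric bilinear form on $W$ such that (i) $(w,\lambda)\in\mathbb Z$ for all $\lambda\in\Lambda$, and (ii) every $G$-invariant symmetric bilinear form on $W$ satisfying (i) is an integer multiple of $(\,,\,)$. $H=\{g\in G: gw=w\}$. *)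

theory Defs
  imports "HOL-Analysis.Analysis" "HOL-Algebra.Group"
begin

text \<open>Model: \<Lambda> = integer vectors in W = rat^'n (a lattice of rank CARD('n));
  G acts through a representation \<rho> by integer matrices.\<close>

definition lattice :: "(rat ^ 'n) set" where
  "lattice = {v. \<forall>i. v $ i \<in> \<int>}"

definition int_matrix :: "rat ^ 'n ^ 'n \<Rightarrow> bool" where
  "int_matrix A \<longleftrightarrow> (\<forall>i j. A $ i $ j \<in> \<int>)"

definition int_rep :: "('g, 'b) monoid_scheme \<Rightarrow> ('g \<Rightarrow> rat ^ 'n ^ 'n) \<Rightarrow> bool" where
  "int_rep G \<rho> \<longleftrightarrow>
     (\<forall>g\<in>carrier G. int_matrix (\<rho> g)) \<and>
     (\<forall>g\<in>carrier G. \<forall>h\<in>carrier G. \<rho> (g \<otimes>\<^bsub>G\<^esub> h) = \<rho> g ** \<rho> h) \<and>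
     \<rho> \<one>\<^bsub>G\<^esub> = mat 1"

definition cmat :: "rat ^ 'n ^ 'n \<Rightarrow> complex ^ 'n ^ 'n" where
  "cmat A = (\<chi> i j. of_rat (A $ i $ j))"

definition complex_subspace :: "(complex ^ 'n) set \<Rightarrow> bool" where
  "complex_subspace V \<longleftrightarrow> 0 \<in> V \<and> (\<forall>x\<in>V. \<forall>y\<in>V. x + y \<in> V) \<and> (\<forall>c. \<forall>x\<in>V. c *s x \<in> V)"

definition abs_irreducible :: "('g, 'b) monoid_scheme \<Rightarrow> ('g \<Rightarrow> rat ^ 'n ^ 'n) \<Rightarrow> bool" where
  "abs_irreducible G \<rho> \<longleftrightarrow>
     (\<forall>V. complex_subspace V \<and> (\<forall>g\<in>carrier G. \<forall>v\<in>V. cmat (\<rho> g) *v v \<in> V)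
          \<longrightarrow> V = {0} \<or> V = UNIV)"

definition is_weight :: "('g, 'b) monoid_scheme \<Rightarrow> ('g \<Rightarrow> rat ^ 'n ^ 'n) \<Rightarrow> rat ^ 'n \<Rightarrow> bool" where
  "is_weight G \<rho> w \<longleftrightarrow> (\<forall>g\<in>carrier G. \<rho> g *v w - w \<in> lattice)"

definition rat_bilinear :: "(rat ^ 'n \<Rightarrow> rat ^ 'n \<Rightarrow> rat) \<Rightarrow> bool" where
  "rat_bilinear B \<longleftrightarrow>
     (\<forall>x y z. B (x + y) z = B x z + B y z) \<and> (\<forall>c x y. B (c *s x) y = c * B x y) \<and>
     (\<forall>x y z. B x (y + z) = B x y + B x z) \<and> (\<forall>c x y. B x (c *s y) = c * B x y)"

definition sym_form :: "(rat ^ 'n \<Rightarrow> rat ^ 'n \<Rightarrow> rat) \<Rightarrow> bool" where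
  "sym_form B \<longleftrightarrow> (\<forall>x y. B x y = B y x)"

definition invariant_form :: "('g, 'b) monoid_scheme \<Rightarrow> ('g \<Rightarrow> rat ^ 'n ^ 'n) \<Rightarrow> (rat ^ 'n \<Rightarrow> rat ^ 'n \<Rightarrow> rat) \<Rightarrow> bool" where
  "invariant_form G \<rho> B \<longleftrightarrow> (\<forall>g\<in>carrier G. \<forall>x y. B (\<rho> g *v x) (\<rho> g *v y) = B x y)"

definition neg_definite :: "(rat ^ 'n \<Rightarrow> rat ^ 'n \<Rightarrow> rat) \<Rightarrow> bool" where
  "neg_definite B \<longleftrightarrow> (\<forall>x. x \<noteq> 0 \<longrightarrow> B x x < 0)"

definition integral_at :: "(rat ^ 'n \<Rightarrow> rat ^ 'n \<Rightarrow> rat) \<Rightarrow> rat ^ 'n \<Rightarrow> bool" where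
  "integral_at B w \<longleftrightarrow> (\<forall>l\<in>lattice. B w l \<in> \<int>)"

definition associated_form :: "('g, 'b) monoid_scheme \<Rightarrow> ('g \<Rightarrow> rat ^ 'n ^ 'n) \<Rightarrow> rat ^ 'n \<Rightarrow> (rat ^ 'n \<Rightarrow> rat ^ 'n \<Rightarrow> rat) \<Rightarrow> bool" where
  "associated_form G \<rho> w B \<longleftrightarrow>
     rat_bilinear B \<and> sym_form B \<and> invariant_form G \<rho> B \<and> neg_definite B \<and> integral_at B w \<and>
     (\<forall>B'. rat_bilinear B' \<and> sym_form B' \<and> invariant_form G \<rho> B' \<and> integral_at B' w
            \<longrightarrow> (\<exists>k::int. B' = (\<lambda>x y. of_int k * B x y)))"

definition stab :: "('g, 'b) monoid_scheme \<Rightarrow> ('g \<Rightarrow> rat ^ 'n ^ 'n) \<Rightarrow> rat ^ 'n \<Rightarrow> 'g set" where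
  "stab G \<rho> w = {g \<in> carrier G. \<rho> g *v w = w}"

end

theory Submission
  imports Defs
begin

text \<open>For \<open>v = g w\<close>, invariance gives \<open>(v, v) = (w, w)\<close>, so expanding the square of
  \<open>v - w\<close> yields \<open>(v - w, v - w) = 2 ((w, w) - (w, v))\<close>. Negative definiteness makes this
  nonpositive, and zero only when \<open>g w = w\<close>; integrality follows because \<open>v - w \<in> \<Lambda>\<close>.
  Finiteness of \<open>G\<close>, integrality of \<open>\<rho>\<close> and absolute irreducibility are only needed for the
  existence of the associated form, which the statement takes as given.\<close>

lemma rat_bilinear_diff_left:
  assumes "rat_bilinear B"
  shows "B (x - y) z = B x z - B y z"
proof -
  have "B x z = B ((x - y) + y) z" by simp
  also have "\<dots> = B (x - y) z + B y z"
    using assms unfolding rat_bilinear_def by blast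
  finally show ?thesis by simp
qed

lemma rat_bilinear_diff_right:
  assumes "rat_bilinear B"
  shows "B z (x - y) = B z x - B z y"
proof -
  have "B z x = B z ((x - y) + y)" by simp
  also have "\<dots> = B z (x - y) + B z y"
    using assms unfolding rat_bilinear_def by blast
  finally show ?thesis by simp
qed

lemma neg_definite_nonpos:
  assumes "rat_bilinear B" and "neg_definite B"
  shows "B x x \<le> 0"
proof (cases "x = 0")
  case True
  then show ?thesis using rat_bilinear_diff_left[OF assms(1), of 0 0 0] by simp
next
  case False
  then show ?thesis using assms(2) unfolding neg_definite_def by (simp add: less_imp_le)
qed

lemma sym_form_diff_self_equal_norms:
  assumes "rat_bilinear B" and "sym_form B" and "B v v = B w w"
  shows "B (v - w) (v - w) = 2 * (B w w - B w v)"
proof -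
  have "B (v - w) (v - w) = B v v - B v w - (B w v - B w w)"
    by (simp add: rat_bilinear_diff_left[OF assms(1)] rat_bilinear_diff_right[OF assms(1)])
  moreover have "B v w = B w v" using assms(2) unfolding sym_form_def by blast
  ultimately show ?thesis using assms(3) by simp
qed

lemma invariant_form_displacement:
  assumes "rat_bilinear B" and "sym_form B" and "invariant_form G \<rho> B"
    and "g \<in> carrier G"
  shows "B (\<rho> g *v w - w) (\<rho> g *v w - w) = 2 * (B w w - B w (\<rho> g *v w))"
proof (rule sym_form_diff_self_equal_norms[OF assms(1,2)])
  show "B (\<rho> g *v w) (\<rho> g *v w) = B w w"
    using assms(3,4) unfolding invariant_form_def by blast
qed

lemma weight_pairing_diff_integral:
  assumes "rat_bilinear B" and "is_weight G \<rho> w" and "integral_at B w"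
    and "g \<in> carrier G"
  shows "B w (\<rho> g *v w) - B w w \<in> \<int>"
proof -
  have "\<rho> g *v w - w \<in> lattice"
    using assms(2,4) unfolding is_weight_def by blast
  then have "B w (\<rho> g *v w - w) \<in> \<int>"
    using assms(3) unfolding integral_at_def by blast
  then show ?thesis by (simp add: rat_bilinear_diff_right[OF assms(1)])
qed

theorem lemma2p3:
  fixes G :: "('g, 'b) monoid_scheme" and \<rho> :: "'g \<Rightarrow> rat ^ 'n ^ 'n"
    and w :: "rat ^ 'n" and B :: "rat ^ 'n \<Rightarrow> rat ^ 'n \<Rightarrow> rat"
  assumes "group G" and "finite (carrier G)"
    and "int_rep G \<rho>" and "abs_irreducible G \<rho>"
    and "is_weight G \<rho> w"
    and "associated_form G \<rho> w B"
  shows "(\<forall>g\<in>carrier G. B w (\<rho> g *v w) - B w w \<in> \<int>) \<and>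
         (\<forall>g\<in>carrier G. B w (\<rho> g *v w) \<ge> B w w) \<and>
         (\<forall>g\<in>carrier G - stab G \<rho> w. B w (\<rho> g *v w) > B w w)"
proof -
  have bil: "rat_bilinear B" and sym: "sym_form B" and inv: "invariant_form G \<rho> B"
    and neg: "neg_definite B" and int: "integral_at B w"
    using assms(6) unfolding associated_form_def by auto
  note displacement = invariant_form_displacement[OF bil sym inv]
  show ?thesis
  proof (intro conjI ballI)
    fix g assume "g \<in> carrier G"
    then show "B w (\<rho> g *v w) - B w w \<in> \<int>"
      using weight_pairing_diff_integral[OF bil assms(5) int] by blast
  next
    fix g assume "g \<in> carrier G"
    then show "B w (\<rho> g *v w) \<ge> B w w"
      using displacement neg_definite_nonpos[OF bil neg, of "\<rho> g *v w - w"] by simp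
  next
    fix g assume g: "g \<in> carrier G - stab G \<rho> w"
    then have "\<rho> g *v w - w \<noteq> 0" unfolding stab_def by auto
    then have "B (\<rho> g *v w - w) (\<rho> g *v w - w) < 0"
      using neg unfolding neg_definite_def by blast
    then show "B w (\<rho> g *v w) > B w w" using displacement g by simp
  qed
qed

end
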